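(* Let $(G,f)$ be a tensor network where $G=(\mathcal V,\mathcal E)$ admits an $(s,t)$-bipolar orientation for some vertices $s,t\in\mathcal V$. Then \[|\mathrm{val}(G,f)|\le\|f(s)\|_F\,\|f(t)\|_F\prod_{v\in\mathcal V\setminus\{s,t\}}\|f(v)\|_{\mathrm{mat}\text{-}\mathrm{op}}\prod_{e\in\mathcal E}\|f(e)\|_{\mathrm{op}}.\]
   Context: Tensor network: a pair $(G,f)$ where $G=(\mathcal V,\mathcal E)$ is a finite multigraph without self-loops, each vertex $v$ has an ordered list $\partial v$ of its incident edges ($\deg(v)=|\partial v|$, counting multiplicity), each edge $e=(u,v)$ has an ordering of its endpoints; $f(v)\in(\mathbb R^n)^{\otimes\deg(v)}$ for $v\in\mathcal V$ and $f(e)\in\mathbb R^{n\times n}$ for $e\in\mathcal E$. Its value is $\mathrm{val}(G,f)=\sum_{(i_{v,e})}\prod_{v\in\mathcal V}f(v)[i_{v,e}:e\in\partial v]\prod_{e=(u,v)\in\mathcal E}f(e)[i_{u,e},i_{v,e}]$, summing over one index $i_{v,e}\in[n]$ for each incident vertex–edge pair. Bipolar orientation: $G$ admits an $(s,t)$-bipolar orientation if its edges can be directed so that there are no directed cycles, $s$ is the unique source (no incoming edges) and $t$ the unique sink (no outgoing edges). Norms: for a tensor $T\in(\mathbb R^n)^{\otimes k}$, $\|T\|_F$ is the Euclidean norm of its vectorization; for a partition $[k]=I\sqcup J$, $\|T\|_{I\to J}$ is the operator norm of the matricization of $T$ with row indices $I$ and column indices $J$; $\|T\|_{\mathrm{mat}\text{-}\mathrm{op}}=\max\{\|T\|_{I\to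 J}: I\sqcup J=[k],\ |I|\ge1,\ |J|\ge1\}$. $\|\cdot\|_{\mathrm{op}}$ is the matrix operator norm. *)

theory Defs
  imports Complex_Main "HOL-Library.FuncSet"
begin

text \<open>A tensor with legs indexed by a finite set K of edges is a function
('e \<Rightarrow> nat) \<Rightarrow> real, evaluated only on index assignments in PiE K {..<n}.\<close>

definition multigraph :: "'v set \<Rightarrow> 'e set \<Rightarrow> ('e \<Rightarrow> 'v \<times> 'v) \<Rightarrow> bool" where
  "multigraph V E ends \<longleftrightarrow> finite V \<and> finite E \<and>
     (\<forall>e\<in>E. fst (ends e) \<in> V \<and> snd (ends e) \<in> V \<and> fst (ends e) \<noteq> snd (ends e))"

definition incident :: "'e set \<Rightarrow> ('e \<Rightarrow> 'v \<times> 'v) \<Rightarrow> 'v \<Rightarrow> 'e set" where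
  "incident E ends v = {e\<in>E. fst (ends e) = v \<or> snd (ends e) = v}"

text \<open>Value of the network. The index i e = (i_{u,e}, i_{v,e}) for e = (u,v).\<close>
definition tn_val :: "nat \<Rightarrow> 'v set \<Rightarrow> 'e set \<Rightarrow> ('e \<Rightarrow> 'v \<times> 'v)
    \<Rightarrow> ('v \<Rightarrow> ('e \<Rightarrow> nat) \<Rightarrow> real) \<Rightarrow> ('e \<Rightarrow> nat \<Rightarrow> nat \<Rightarrow> real) \<Rightarrow> real" where
  "tn_val n V E ends fv fe =
    (\<Sum>i\<in>PiE E (\<lambda>_. {..<n} \<times> {..<n}).
       (\<Prod>v\<in>V. fv v (restrict (\<lambda>e. if fst (ends e) = v then fst (i e) else snd (i e))
                               (incident E ends v)))
     * (\<Prod>e\<in>E. fe e (fst (i e)) (snd (i e))))"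

definition frob_norm :: "nat \<Rightarrow> 'e set \<Rightarrow> (('e \<Rightarrow> nat) \<Rightarrow> real) \<Rightarrow> real" where
  "frob_norm n K T = sqrt (\<Sum>a\<in>PiE K (\<lambda>_. {..<n}). (T a)^2)"

definition op_norm :: "'a set \<Rightarrow> 'b set \<Rightarrow> ('a \<Rightarrow> 'b \<Rightarrow> real) \<Rightarrow> real" where
  "op_norm A B M = Sup {sqrt (\<Sum>a\<in>A. (\<Sum>b\<in>B. M a b * y b)^2) | y. (\<Sum>b\<in>B. (y b)^2) \<le> 1}"

definition matricization_norm :: "nat \<Rightarrow> 'e set \<Rightarrow> 'e set \<Rightarrow> (('e \<Rightarrow> nat) \<Rightarrow> real) \<Rightarrow> real" where
  "matricization_norm n I J T =
     op_norm (PiE I (\<lambda>_. {..<n})) (PiE J (\<lambda>_. {..<n}))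
             (\<lambda>a b. T (\<lambda>e. if e \<in> I then a e else b e))"

definition mat_op_norm :: "nat \<Rightarrow> 'e set \<Rightarrow> (('e \<Rightarrow> nat) \<Rightarrow> real) \<Rightarrow> real" where
  "mat_op_norm n K T = Max {matricization_norm n I (K - I) T | I. I \<subseteq> K \<and> I \<noteq> {} \<and> K - I \<noteq> {}}"

definition matrix_op_norm :: "nat \<Rightarrow> (nat \<Rightarrow> nat \<Rightarrow> real) \<Rightarrow> real" where
  "matrix_op_norm n M = op_norm {..<n} {..<n} M"

text \<open>An orientation chooses for each edge whether to keep (True) or reverse (False)
its endpoint order.\<close>
definition oriented_arc :: "('e \<Rightarrow> 'v \<times> 'v) \<Rightarrow> ('e \<Rightarrow> bool) \<Rightarrow> 'e \<Rightarrow> 'v \<times> 'v" where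
  "oriented_arc ends d e = (if d e then ends e else prod.swap (ends e))"

definition bipolar_orientation :: "'v set \<Rightarrow> 'e set \<Rightarrow> ('e \<Rightarrow> 'v \<times> 'v) \<Rightarrow> ('e \<Rightarrow> bool)
    \<Rightarrow> 'v \<Rightarrow> 'v \<Rightarrow> bool" where
  "bipolar_orientation V E ends d s t \<longleftrightarrow>
     s \<in> V \<and> t \<in> V \<and> s \<noteq> t \<and>
     acyclic (oriented_arc ends d ` E) \<and>
     (\<forall>v\<in>V. (\<not> (\<exists>e\<in>E. snd (oriented_arc ends d e) = v)) \<longleftrightarrow> v = s) \<and>
     (\<forall>v\<in>V. (\<not> (\<exists>e\<in>E. fst (oriented_arc ends d e) = v)) \<longleftrightarrow> v = t)"

definition has_bipolar_orientation :: "'v set \<Rightarrow> 'e set \<Rightarrow> ('e \<Rightarrow> 'v \<times> 'v) \<Rightarrow> 'v \<Rightarrow> 'v \<Rightarrow> bool" where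
  "has_bipolar_orientation V E ends s t \<longleftrightarrow> (\<exists>d. bipolar_orientation V E ends d s t)"

end

(* Orient every edge along the bipolar orientation: reversing an edge only transposes its matrix,
   which preserves the value of the network and does not increase the operator norm.  Ranking the
   vertices by their number of ancestors makes s the unique vertex of least rank.

   Contract s into a vertex w of least rank among the others.  Every arc into w comes from s, so
   the new tensor at w carries the remaining legs of s and the outgoing legs of w, and its
   Frobenius norm is at most |f(s)|_F, times the norms of the contracted edge matrices, times the
   norm of f(w) as a map from its incoming to its outgoing legs.  The contracted network is again
   ranked, with source w, so induction on the number of vertices bounds |val(G,f)| by |f(s)|_F
   times these out/in norms of all other vertices times all edge norms.

   The sink t has no outgoing legs, so its out/in norm is at most |f(t)|_F; every other vertex has
   both incoming and outgoing legs, so its out/in norm is one of the matricization norms over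
   which the mat-op norm is the maximum. *)

theory Submission
  imports Defs "HOL-Analysis.Convex"
begin

section \<open>Operator norms\<close>

lemma Cauchy_Schwarz_unit_ball:
  fixes m y :: "'b \<Rightarrow> real"
  assumes "(\<Sum>b\<in>B. (y b)^2) \<le> 1"
  shows "(\<Sum>b\<in>B. m b * y b)^2 \<le> (\<Sum>b\<in>B. (m b)^2)"
proof -
  have "(\<Sum>b\<in>B. m b * y b)^2 \<le> (\<Sum>b\<in>B. (m b)^2) * (\<Sum>b\<in>B. (y b)^2)"
    by (rule Cauchy_Schwarz_ineq_sum)
  also have "\<dots> \<le> (\<Sum>b\<in>B. (m b)^2)"
    using mult_left_mono[OF assms, of "\<Sum>b\<in>B. (m b)^2"] by (simp add: sum_nonneg)
  finally show ?thesis .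
qed

lemma bdd_above_op_norm:
  fixes M :: "'a \<Rightarrow> 'b \<Rightarrow> real"
  shows "bdd_above {sqrt (\<Sum>a\<in>A. (\<Sum>b\<in>B. M a b * y b)^2) | y. (\<Sum>b\<in>B. (y b)^2) \<le> (1::real)}"
proof (rule bdd_aboveI, clarify)
  fix y :: "'b \<Rightarrow> real" assume "(\<Sum>b\<in>B. (y b)^2) \<le> 1"
  then have "(\<Sum>a\<in>A. (\<Sum>b\<in>B. M a b * y b)^2) \<le> (\<Sum>a\<in>A. \<Sum>b\<in>B. (M a b)^2)"
    by (intro sum_mono Cauchy_Schwarz_unit_ball)
  then show "sqrt (\<Sum>a\<in>A. (\<Sum>b\<in>B. M a b * y b)^2) \<le> sqrt (\<Sum>a\<in>A. \<Sum>b\<in>B. (M a b)^2)"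
    by simp
qed

lemma op_norm_ge:
  assumes "(\<Sum>b\<in>B. (y b)^2) \<le> 1"
  shows "sqrt (\<Sum>a\<in>A. (\<Sum>b\<in>B. M a b * y b)^2) \<le> op_norm A B M"
  unfolding op_norm_def using assms by (intro cSup_upper[OF _ bdd_above_op_norm]) blast

lemma op_norm_nonneg: "0 \<le> op_norm A B M"
  using op_norm_ge[where y="\<lambda>_. 0" and A=A and M=M] by simp

lemma op_norm_le:
  assumes "0 \<le> c"
    and "\<And>y. (\<Sum>b\<in>B. (y b)^2) \<le> 1 \<Longrightarrow> (\<Sum>a\<in>A. (\<Sum>b\<in>B. M a b * y b)^2) \<le> c^2"
  shows "op_norm A B M \<le> c"
  unfolding op_norm_def
proof (rule cSup_least)
  show "{sqrt (\<Sum>a\<in>A. (\<Sum>b\<in>B. M a b * y b)^2) | y. (\<Sum>b\<in>B. (y b)^2) \<le> 1} \<noteq> {}"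
    by (auto intro: exI[of _ "\<lambda>_. 0"])
next
  fix x assume "x \<in> {sqrt (\<Sum>a\<in>A. (\<Sum>b\<in>B. M a b * y b)^2) | y. (\<Sum>b\<in>B. (y b)^2) \<le> 1}"
  then obtain y where "x = sqrt (\<Sum>a\<in>A. (\<Sum>b\<in>B. M a b * y b)^2)" "(\<Sum>b\<in>B. (y b)^2) \<le> 1"
    by blast
  then show "x \<le> c"
    using assms real_sqrt_le_mono[of _ "c^2"] by simp
qed

lemma op_norm_apply_le:
  assumes "finite B"
  shows "(\<Sum>a\<in>A. (\<Sum>b\<in>B. M a b * y b)^2) \<le> (op_norm A B M)^2 * (\<Sum>b\<in>B. (y b)^2)"
proof (cases "(\<Sum>b\<in>B. (y b)^2) = 0")
  case True
  then have "\<forall>b\<in>B. y b = 0" using assms by (simp add: sum_nonneg_eq_0_iff)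
  then show ?thesis by (simp add: True)
next
  case False
  define r where "r = sqrt (\<Sum>b\<in>B. (y b)^2)"
  have "0 \<le> (\<Sum>b\<in>B. (y b)^2)"
    by (simp add: sum_nonneg)
  with False have "0 < (\<Sum>b\<in>B. (y b)^2)"
    by linarith
  then have r: "r > 0" "r^2 = (\<Sum>b\<in>B. (y b)^2)"
    unfolding r_def by simp_all
  have "(\<Sum>b\<in>B. (y b / r)^2) = 1"
    using r False by (simp add: power_divide sum_divide_distrib[symmetric])
  then have "sqrt (\<Sum>a\<in>A. (\<Sum>b\<in>B. M a b * (y b / r))^2) \<le> op_norm A B M"
    by (intro op_norm_ge) simp
  moreover have "(\<Sum>a\<in>A. (\<Sum>b\<in>B. M a b * (y b / r))^2) = (\<Sum>a\<in>A. (\<Sum>b\<in>B. M a b * y b)^2) / r^2"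
    by (simp add: sum_divide_distrib[symmetric] power_divide)
  ultimately have "sqrt (\<Sum>a\<in>A. (\<Sum>b\<in>B. M a b * y b)^2) / r \<le> op_norm A B M"
    using r(1) by (simp add: real_sqrt_divide)
  then have "sqrt (\<Sum>a\<in>A. (\<Sum>b\<in>B. M a b * y b)^2) \<le> op_norm A B M * r"
    using r(1) by (simp add: divide_le_eq)
  then have "(sqrt (\<Sum>a\<in>A. (\<Sum>b\<in>B. M a b * y b)^2))^2 \<le> (op_norm A B M * r)^2"
    by (rule power_mono) (simp add: sum_nonneg)
  then show ?thesis
    by (simp add: sum_nonneg power_mult_distrib r(2))
qed

lemma op_norm_transpose_apply_le:
  fixes M :: "'a \<Rightarrow> 'b \<Rightarrow> real"
  assumes "finite B"
  shows "(\<Sum>b\<in>B. (\<Sum>a\<in>A. M a b * y a)^2) \<le> (op_norm A B M)^2 * (\<Sum>a\<in>A. (y a)^2)"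
proof -
  \<comment> \<open>For z = M^T y: |z|^2 = <y, M z> \<le> |y| |M z| \<le> |y| \<parallel>M\<parallel> |z|.\<close>
  define z where "z = (\<lambda>b. \<Sum>a\<in>A. M a b * y a)"
  define S where "S = (\<Sum>b\<in>B. (z b)^2)"
  define w where "w = (\<lambda>a. \<Sum>b\<in>B. M a b * z b)"
  have "S = (\<Sum>b\<in>B. z b * (\<Sum>a\<in>A. M a b * y a))"
    unfolding S_def z_def by (simp add: power2_eq_square)
  also have "\<dots> = (\<Sum>a\<in>A. y a * w a)"
    unfolding w_def by (simp add: sum_distrib_left sum_distrib_right mult_ac sum.swap[of _ B A])
  finally have "S^2 \<le> (\<Sum>a\<in>A. (y a)^2) * (\<Sum>a\<in>A. (w a)^2)"
    by (simp add: Cauchy_Schwarz_ineq_sum)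
  also have "\<dots> \<le> (\<Sum>a\<in>A. (y a)^2) * ((op_norm A B M)^2 * S)"
    unfolding w_def S_def by (intro mult_left_mono op_norm_apply_le assms) (simp add: sum_nonneg)
  finally have "S * S \<le> ((op_norm A B M)^2 * (\<Sum>a\<in>A. (y a)^2)) * S"
    by (simp add: power2_eq_square mult_ac)
  moreover have "0 \<le> S" unfolding S_def by (simp add: sum_nonneg)
  ultimately have "S \<le> (op_norm A B M)^2 * (\<Sum>a\<in>A. (y a)^2)"
    by (cases "S = 0") (auto simp: sum_nonneg)
  then show ?thesis unfolding S_def z_def .
qed

lemma op_norm_transpose_le:
  fixes M :: "'a \<Rightarrow> 'b \<Rightarrow> real"
  assumes "finite B"
  shows "op_norm B A (\<lambda>b a. M a b) \<le> op_norm A B M"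
proof (rule op_norm_le[OF op_norm_nonneg])
  fix y :: "'a \<Rightarrow> real" assume y: "(\<Sum>a\<in>A. (y a)^2) \<le> 1"
  have "(\<Sum>b\<in>B. (\<Sum>a\<in>A. M a b * y a)^2) \<le> (op_norm A B M)^2 * (\<Sum>a\<in>A. (y a)^2)"
    by (rule op_norm_transpose_apply_le[OF assms])
  also have "\<dots> \<le> (op_norm A B M)^2"
    using mult_left_mono[OF y, of "(op_norm A B M)^2"] by simp
  finally show "(\<Sum>b\<in>B. (\<Sum>a\<in>A. M a b * y a)^2) \<le> (op_norm A B M)^2" .
qed

lemma matrix_op_norm_transpose_le: "matrix_op_norm n (\<lambda>i j. M j i) \<le> matrix_op_norm n M"
  unfolding matrix_op_norm_def by (rule op_norm_transpose_le) auto

lemma matrix_op_norm_nonneg: "0 \<le> matrix_op_norm n M"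
  unfolding matrix_op_norm_def by (rule op_norm_nonneg)

lemma frob_norm_nonneg: "0 \<le> frob_norm n K T"
  unfolding frob_norm_def by (simp add: sum_nonneg)

lemma matricization_norm_nonneg: "0 \<le> matricization_norm n I J T"
  unfolding matricization_norm_def by (rule op_norm_nonneg)

lemma matricization_norm_empty_le_frob_norm: "matricization_norm n {} J T \<le> frob_norm n J T"
  unfolding matricization_norm_def frob_norm_def
  by (rule op_norm_le) (simp_all add: sum_nonneg Cauchy_Schwarz_unit_ball)

lemma matricization_norm_le_mat_op_norm:
  assumes "finite K" "I \<subseteq> K" "I \<noteq> {}" "K - I \<noteq> {}"
  shows "matricization_norm n I (K - I) T \<le> mat_op_norm n K T"
proof -
  have "{matricization_norm n I (K - I) T | I. I \<subseteq> K \<and> I \<noteq> {} \<and> K - I \<noteq> {}}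
      \<subseteq> (\<lambda>I. matricization_norm n I (K - I) T) ` Pow K"
    by auto
  then have "finite {matricization_norm n I (K - I) T | I. I \<subseteq> K \<and> I \<noteq> {} \<and> K - I \<noteq> {}}"
    using assms(1) by (meson finite_Pow_iff finite_imageI finite_subset)
  then show ?thesis
    unfolding mat_op_norm_def by (rule Max_ge) (use assms in blast)
qed

lemma sum_PiE_insert:
  assumes "x \<notin> S"
  shows "(\<Sum>g\<in>PiE (insert x S) T. f g) = (\<Sum>y\<in>T x. \<Sum>g\<in>PiE S T. f (g(x := y)))"
proof -
  have "(\<Sum>g\<in>PiE (insert x S) T. f g) = (\<Sum>(y, g)\<in>T x \<times> PiE S T. f (g(x := y)))"
    using assms
    by (intro sum.reindex_bij_witness[of _ "\<lambda>(y, g). g(x := y)" "\<lambda>g. (g x, g(x := undefined))"])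
       (auto simp: PiE_def extensional_def)
  then show ?thesis
    by (simp add: sum.cartesian_product)
qed

lemma sum_PiE_Un:
  assumes "A \<inter> B = {}"
  shows "(\<Sum>x\<in>PiE (A \<union> B) T. f x) = (\<Sum>a\<in>PiE A T. \<Sum>b\<in>PiE B T. f (\<lambda>e. if e \<in> A then a e else b e))"
proof -
  have "(\<Sum>x\<in>PiE (A \<union> B) T. f x) = (\<Sum>(a, b)\<in>PiE A T \<times> PiE B T. f (\<lambda>e. if e \<in> A then a e else b e))"
    using assms
    by (intro sum.reindex_bij_witness[of _ "\<lambda>(a, b) e. if e \<in> A then a e else b e"
          "\<lambda>x. (restrict x A, restrict x B)"])
       (auto simp: PiE_def extensional_def Pi_def intro!: arg_cong[where f=f] ext)
  then show ?thesis
    by (simp add: sum.cartesian_product)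
qed

lemma sum_PiE_Times:
  "(\<Sum>c\<in>PiE D (\<lambda>_. S \<times> S). f c) = (\<Sum>a\<in>PiE D (\<lambda>_. S). \<Sum>b\<in>PiE D (\<lambda>_. S). f (\<lambda>e\<in>D. (a e, b e)))"
proof -
  have "(\<Sum>c\<in>PiE D (\<lambda>_. S \<times> S). f c) = (\<Sum>(a, b)\<in>PiE D (\<lambda>_. S) \<times> PiE D (\<lambda>_. S). f (\<lambda>e\<in>D. (a e, b e)))"
    by (intro sum.reindex_bij_witness[of _ "\<lambda>(a, b). (\<lambda>e\<in>D. (a e, b e))"
          "\<lambda>c. (\<lambda>e\<in>D. fst (c e), \<lambda>e\<in>D. snd (c e))"])
       (auto simp: PiE_def extensional_def Pi_def mem_Times_iff intro!: arg_cong[where f=f] ext)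
  then show ?thesis
    by (simp add: sum.cartesian_product)
qed

section \<open>Contracting two tensors\<close>

lemma kronecker_transpose_apply_le:
  fixes M :: "'e \<Rightarrow> nat \<Rightarrow> nat \<Rightarrow> real"
  assumes "finite D"
  shows "(\<Sum>b\<in>PiE D (\<lambda>_. {..<n}). (\<Sum>a\<in>PiE D (\<lambda>_. {..<n}). r a * (\<Prod>e\<in>D. M e (a e) (b e)))^2)
         \<le> (\<Prod>e\<in>D. matrix_op_norm n (M e))^2 * (\<Sum>a\<in>PiE D (\<lambda>_. {..<n}). (r a)^2)"
  using assms
proof (induction D arbitrary: r rule: finite_induct)
  case empty
  then show ?case by simp
next
  case (insert e D)
  define X where "X = PiE D (\<lambda>_. {..<n})"
  define w where "w = (\<lambda>i b. \<Sum>a\<in>X. r (a(e := i)) * (\<Prod>e'\<in>D. M e' (a e') (b e')))"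
  have split: "(\<Sum>a\<in>PiE (insert e D) (\<lambda>_. {..<n}). r a * (\<Prod>e'\<in>insert e D. M e' (a e') ((b(e := j)) e')))
      = (\<Sum>i<n. M e i j * w i b)" for b j
  proof -
    have "(\<Prod>e'\<in>insert e D. M e' ((a(e := i)) e') ((b(e := j)) e')) = M e i j * (\<Prod>e'\<in>D. M e' (a e') (b e'))"
      for a i
      using insert.hyps by (auto intro!: prod.cong)
    then show ?thesis
      unfolding X_def w_def sum_PiE_insert[OF insert.hyps(2)]
      by (simp add: sum_distrib_left mult_ac)
  qed
  have "(\<Sum>b\<in>PiE (insert e D) (\<lambda>_. {..<n}).
          (\<Sum>a\<in>PiE (insert e D) (\<lambda>_. {..<n}). r a * (\<Prod>e'\<in>insert e D. M e' (a e') (b e')))^2)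
      = (\<Sum>j<n. \<Sum>b\<in>X. (\<Sum>i<n. M e i j * w i b)^2)"
    unfolding X_def by (subst sum_PiE_insert[OF insert.hyps(2)], simp only: split)
  also have "\<dots> = (\<Sum>b\<in>X. \<Sum>j<n. (\<Sum>i<n. M e i j * w i b)^2)"
    by (rule sum.swap)
  also have "\<dots> \<le> (\<Sum>b\<in>X. (matrix_op_norm n (M e))^2 * (\<Sum>i<n. (w i b)^2))"
    unfolding matrix_op_norm_def by (intro sum_mono op_norm_transpose_apply_le) auto
  also have "\<dots> = (matrix_op_norm n (M e))^2 * (\<Sum>i<n. \<Sum>b\<in>X. (w i b)^2)"
    by (simp add: sum_distrib_left sum.swap[of _ X])
  also have "\<dots> \<le> (matrix_op_norm n (M e))^2
      * (\<Sum>i<n. (\<Prod>e'\<in>D. matrix_op_norm n (M e'))^2 * (\<Sum>a\<in>X. (r (a(e := i)))^2))"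
    unfolding w_def X_def by (intro mult_left_mono sum_mono insert.IH) auto
  also have "\<dots> = (\<Prod>e'\<in>insert e D. matrix_op_norm n (M e'))^2 * (\<Sum>a\<in>PiE (insert e D) (\<lambda>_. {..<n}). (r a)^2)"
    unfolding X_def using insert.hyps
    by (simp add: sum_PiE_insert sum_distrib_left power_mult_distrib mult_ac)
  finally show ?case .
qed

definition contract_tensor :: "nat \<Rightarrow> 'e set \<Rightarrow> 'e set \<Rightarrow> 'e set \<Rightarrow> (('e \<Rightarrow> nat) \<Rightarrow> real)
    \<Rightarrow> (('e \<Rightarrow> nat) \<Rightarrow> real) \<Rightarrow> ('e \<Rightarrow> nat \<Rightarrow> nat \<Rightarrow> real) \<Rightarrow> ('e \<Rightarrow> nat) \<Rightarrow> real" where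
  "contract_tensor n D A B S T fe x =
    (\<Sum>a\<in>PiE D (\<lambda>_. {..<n}). \<Sum>b\<in>PiE D (\<lambda>_. {..<n}).
       S (\<lambda>e\<in>A. if e \<in> D then a e else x e) * T (\<lambda>e\<in>B. if e \<in> D then b e else x e)
       * (\<Prod>e\<in>D. fe e (a e) (b e)))"

lemma contract_tensor_apply:
  assumes "P \<inter> Q = {}" "P \<inter> D = {}" "Q \<inter> D = {}"
  shows "contract_tensor n D (P \<union> D) (Q \<union> D) S T fe (\<lambda>e. if e \<in> P then p e else q e)
    = (\<Sum>b\<in>PiE D (\<lambda>_. {..<n}). T (\<lambda>e. if e \<in> Q then q e else b e)
         * (\<Sum>a\<in>PiE D (\<lambda>_. {..<n}). S (\<lambda>e. if e \<in> P then p e else a e) * (\<Prod>e\<in>D. fe e (a e) (b e))))"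
proof -
  have "(\<lambda>e\<in>P \<union> D. if e \<in> D then a e else if e \<in> P then p e else q e) = (\<lambda>e. if e \<in> P then p e else a e)"
    if "a \<in> PiE D (\<lambda>_. {..<n})" for a
    using assms by (intro ext) (auto simp: PiE_arb[OF that])
  moreover have "(\<lambda>e\<in>Q \<union> D. if e \<in> D then b e else if e \<in> P then p e else q e) = (\<lambda>e. if e \<in> Q then q e else b e)"
    if "b \<in> PiE D (\<lambda>_. {..<n})" for b
    using assms by (intro ext) (auto simp: PiE_arb[OF that])
  ultimately show ?thesis
    unfolding contract_tensor_def
    by (subst sum.swap) (simp add: sum_distrib_left mult_ac cong: sum.cong)
qed

lemma frob_norm_contract_tensor_le:
  assumes fin: "finite P" "finite Q" "finite D"
    and disj: "P \<inter> Q = {}" "P \<inter> D = {}" "Q \<inter> D = {}"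
  shows "frob_norm n (P \<union> Q) (contract_tensor n D (P \<union> D) (Q \<union> D) S T fe)
    \<le> frob_norm n (P \<union> D) S * (\<Prod>e\<in>D. matrix_op_norm n (fe e)) * matricization_norm n Q D T"
proof -
  let ?X = "\<lambda>K. PiE K (\<lambda>_::'e. {..<n})"
  define C where "C = (\<Prod>e\<in>D. matrix_op_norm n (fe e))"
  define N where "N = matricization_norm n Q D T"
  define u where "u = (\<lambda>p b. \<Sum>a\<in>?X D. S (\<lambda>e. if e \<in> P then p e else a e) * (\<Prod>e\<in>D. fe e (a e) (b e)))"
  have row_bound: "(\<Sum>q\<in>?X Q. (contract_tensor n D (P \<union> D) (Q \<union> D) S T fe (\<lambda>e. if e \<in> P then p e else q e))^2)
      \<le> N^2 * (C^2 * (\<Sum>a\<in>?X D. (S (\<lambda>e. if e \<in> P then p e else a e))^2))" for p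
  proof -
    have "(\<Sum>q\<in>?X Q. (contract_tensor n D (P \<union> D) (Q \<union> D) S T fe (\<lambda>e. if e \<in> P then p e else q e))^2)
        = (\<Sum>q\<in>?X Q. (\<Sum>b\<in>?X D. T (\<lambda>e. if e \<in> Q then q e else b e) * u p b)^2)"
      unfolding u_def contract_tensor_apply[OF disj] ..
    also have "\<dots> \<le> N^2 * (\<Sum>b\<in>?X D. (u p b)^2)"
      unfolding N_def matricization_norm_def using fin(3) by (intro op_norm_apply_le finite_PiE) simp_all
    also have "\<dots> \<le> N^2 * (C^2 * (\<Sum>a\<in>?X D. (S (\<lambda>e. if e \<in> P then p e else a e))^2))"
      unfolding u_def C_def by (intro mult_left_mono kronecker_transpose_apply_le fin(3)) simp
    finally show ?thesis .
  qed
  have "(\<Sum>x\<in>?X (P \<union> Q). (contract_tensor n D (P \<union> D) (Q \<union> D) S T fe x)^2)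
      = (\<Sum>p\<in>?X P. \<Sum>q\<in>?X Q. (contract_tensor n D (P \<union> D) (Q \<union> D) S T fe (\<lambda>e. if e \<in> P then p e else q e))^2)"
    by (rule sum_PiE_Un[OF disj(1)])
  also have "\<dots> \<le> (\<Sum>p\<in>?X P. N^2 * (C^2 * (\<Sum>a\<in>?X D. (S (\<lambda>e. if e \<in> P then p e else a e))^2)))"
    by (intro sum_mono row_bound)
  also have "\<dots> = (N * C)^2 * (\<Sum>x\<in>?X (P \<union> D). (S x)^2)"
    by (simp add: sum_PiE_Un[OF disj(2)] sum_distrib_left power_mult_distrib mult.assoc)
  finally have "frob_norm n (P \<union> Q) (contract_tensor n D (P \<union> D) (Q \<union> D) S T fe)
      \<le> sqrt ((N * C)^2 * (\<Sum>x\<in>?X (P \<union> D). (S x)^2))"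
    unfolding frob_norm_def by simp
  also have "\<dots> = frob_norm n (P \<union> D) S * C * N"
    unfolding frob_norm_def using matricization_norm_nonneg[of n Q D T] matrix_op_norm_nonneg
    by (simp add: real_sqrt_mult N_def C_def prod_nonneg mult_ac)
  finally show ?thesis unfolding C_def N_def .
qed

section \<open>Contracting the source into a neighbour\<close>

definition local_index :: "'e set \<Rightarrow> ('e \<Rightarrow> 'v \<times> 'v) \<Rightarrow> ('e \<Rightarrow> nat \<times> nat) \<Rightarrow> 'v \<Rightarrow> 'e \<Rightarrow> nat" where
  "local_index E ends i v =
     restrict (\<lambda>e. if fst (ends e) = v then fst (i e) else snd (i e)) (incident E ends v)"

lemma tn_val_local_index:
  "tn_val n V E ends fv fe = (\<Sum>i\<in>PiE E (\<lambda>_. {..<n} \<times> {..<n}).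
     (\<Prod>v\<in>V. fv v (local_index E ends i v)) * (\<Prod>e\<in>E. fe e (fst (i e)) (snd (i e))))"
  unfolding tn_val_def local_index_def ..

lemma tn_val_fun_upd:
  assumes "finite V" "w \<in> V"
  shows "tn_val n V E ends (fv(w := T)) fe = (\<Sum>i\<in>PiE E (\<lambda>_. {..<n} \<times> {..<n}).
     T (local_index E ends i w) * (\<Prod>v\<in>V - {w}. fv v (local_index E ends i v))
     * (\<Prod>e\<in>E. fe e (fst (i e)) (snd (i e))))"
proof -
  have "(\<Prod>v\<in>V - {w}. (fv(w := T)) v (local_index E ends i v))
    = (\<Prod>v\<in>V - {w}. fv v (local_index E ends i v))" for i
    by (intro prod.cong) auto
  then have "(\<Prod>v\<in>V. (fv(w := T)) v (local_index E ends i v))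
    = T (local_index E ends i w) * (\<Prod>v\<in>V - {w}. fv v (local_index E ends i v))" for i
    using assms by (simp add: prod.remove[of V w])
  then show ?thesis
    unfolding tn_val_local_index by simp
qed

definition arcs :: "'e set \<Rightarrow> ('e \<Rightarrow> 'v \<times> 'v) \<Rightarrow> 'v \<Rightarrow> 'v \<Rightarrow> 'e set" where
  "arcs E ends u v = {e\<in>E. ends e = (u, v)}"

definition merge_ends :: "'v \<Rightarrow> 'v \<Rightarrow> ('e \<Rightarrow> 'v \<times> 'v) \<Rightarrow> 'e \<Rightarrow> 'v \<times> 'v" where
  "merge_ends s w ends = map_prod (id(s := w)) (id(s := w)) \<circ> ends"

lemma multigraph_merge_ends:
  assumes "multigraph V E ends" "w \<in> V" "s \<noteq> w" "\<forall>e\<in>E. snd (ends e) \<noteq> s"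
  shows "multigraph (V - {s}) (E - arcs E ends s w) (merge_ends s w ends)"
  using assms unfolding multigraph_def merge_ends_def arcs_def by (auto simp: prod_eq_iff)

lemma incident_merge_ends_other:
  "v \<noteq> s \<Longrightarrow> v \<noteq> w \<Longrightarrow> incident (E - arcs E ends s w) (merge_ends s w ends) v = incident E ends v"
  unfolding incident_def merge_ends_def arcs_def by (auto simp: prod_eq_iff)

lemma incident_merge_ends_target:
  "s \<noteq> w \<Longrightarrow> incident (E - arcs E ends s w) (merge_ends s w ends) w
    = (incident E ends s \<union> incident E ends w) - arcs E ends s w"
  unfolding incident_def merge_ends_def arcs_def by auto

lemma local_index_merge_ends:
  assumes mg: "multigraph V E ends" and "s \<noteq> w" and no_in: "\<forall>e\<in>E. snd (ends e) \<noteq> s"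
    and agree: "\<forall>e\<in>E - arcs E ends s w. m e = i e"
  shows "v \<noteq> s \<Longrightarrow> v \<noteq> w \<Longrightarrow>
      local_index E ends m v = local_index (E - arcs E ends s w) (merge_ends s w ends) i v"
    and "local_index E ends m s = (\<lambda>e\<in>incident E ends s.
      if e \<in> arcs E ends s w then fst (m e) else local_index (E - arcs E ends s w) (merge_ends s w ends) i w e)"
    and "local_index E ends m w = (\<lambda>e\<in>incident E ends w.
      if e \<in> arcs E ends s w then snd (m e) else local_index (E - arcs E ends s w) (merge_ends s w ends) i w e)"
proof -
  have loop: "fst (ends e) \<noteq> snd (ends e)" if "e \<in> E" for e
    using mg that unfolding multigraph_def by blast
  show "local_index E ends m v = local_index (E - arcs E ends s w) (merge_ends s w ends) i v"
    if "v \<noteq> s" "v \<noteq> w"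
    unfolding local_index_def incident_merge_ends_other[OF that] using that
    by (intro restrict_ext) (auto simp: incident_def arcs_def merge_ends_def agree prod_eq_iff)
  show "local_index E ends m s = (\<lambda>e\<in>incident E ends s.
      if e \<in> arcs E ends s w then fst (m e) else local_index (E - arcs E ends s w) (merge_ends s w ends) i w e)"
    unfolding local_index_def incident_merge_ends_target[OF \<open>s \<noteq> w\<close>] using \<open>s \<noteq> w\<close> no_in
    by (intro restrict_ext) (auto simp: incident_def arcs_def merge_ends_def agree prod_eq_iff)
  show "local_index E ends m w = (\<lambda>e\<in>incident E ends w.
      if e \<in> arcs E ends s w then snd (m e) else local_index (E - arcs E ends s w) (merge_ends s w ends) i w e)"
    unfolding local_index_def incident_merge_ends_target[OF \<open>s \<noteq> w\<close>] using \<open>s \<noteq> w\<close> no_in loop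
    by (intro restrict_ext) (auto simp: incident_def arcs_def merge_ends_def agree prod_eq_iff)
qed

lemma prod_local_index_merge_ends:
  assumes mg: "multigraph V E ends" and "s \<in> V" "w \<in> V" "s \<noteq> w"
    and no_in: "\<forall>e\<in>E. snd (ends e) \<noteq> s" and agree: "\<forall>e\<in>E - arcs E ends s w. m e = i e"
  shows "(\<Prod>v\<in>V. fv v (local_index E ends m v))
    = fv s (\<lambda>e\<in>incident E ends s. if e \<in> arcs E ends s w then fst (m e)
          else local_index (E - arcs E ends s w) (merge_ends s w ends) i w e)
      * fv w (\<lambda>e\<in>incident E ends w. if e \<in> arcs E ends s w then snd (m e)
          else local_index (E - arcs E ends s w) (merge_ends s w ends) i w e)
      * (\<Prod>v\<in>V - {s} - {w}. fv v (local_index (E - arcs E ends s w) (merge_ends s w ends) i v))"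
proof -
  note idx = local_index_merge_ends[OF mg \<open>s \<noteq> w\<close> no_in agree]
  have "finite V"
    using mg unfolding multigraph_def by blast
  have "(\<Prod>v\<in>V - {s} - {w}. fv v (local_index E ends m v))
    = (\<Prod>v\<in>V - {s} - {w}. fv v (local_index (E - arcs E ends s w) (merge_ends s w ends) i v))"
    using idx(1) by (intro prod.cong refl) force
  with \<open>finite V\<close> \<open>s \<in> V\<close> \<open>w \<in> V\<close> \<open>s \<noteq> w\<close> show ?thesis
    by (simp add: prod.remove[of V s] prod.remove[of "V - {s}" w] idx(2,3) mult.assoc)
qed

lemma tn_val_merge_ends:
  fixes ends :: "'e \<Rightarrow> 'v \<times> 'v"
  assumes mg: "multigraph V E ends" and "s \<in> V" "w \<in> V" "s \<noteq> w"
    and no_in: "\<forall>e\<in>E. snd (ends e) \<noteq> s"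
  shows "tn_val n (V - {s}) (E - arcs E ends s w) (merge_ends s w ends)
      (fv(w := contract_tensor n (arcs E ends s w) (incident E ends s) (incident E ends w) (fv s) (fv w) fe)) fe
    = tn_val n V E ends fv fe"
proof -
  define D where "D = arcs E ends s w"
  define ends' where "ends' = merge_ends s w ends"
  define glue where "glue = (\<lambda>i a b. \<lambda>e. if e \<in> E - D then i e else (\<lambda>e\<in>D. (a e :: nat, b e :: nat)) e)"
  define F where "F = (\<lambda>j. (\<Prod>v\<in>V. fv v (local_index E ends j v)) * (\<Prod>e\<in>E. fe e (fst (j e)) (snd (j e))))"
  define R where "R = (\<lambda>i. (\<Prod>v\<in>V - {s} - {w}. fv v (local_index (E - D) ends' i v))
    * (\<Prod>e\<in>E - D. fe e (fst (i e)) (snd (i e))))"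
  let ?Y = "\<lambda>K. PiE K (\<lambda>_::'e. {..<n} \<times> {..<n})"
  let ?X = "PiE D (\<lambda>_::'e. {..<n})"
  let ?contract = "contract_tensor n D (incident E ends s) (incident E ends w) (fv s) (fv w) fe"
  have fin: "finite V" "finite E" and DE: "D \<subseteq> E"
    using mg unfolding multigraph_def D_def arcs_def by auto
  have factor: "F (glue i a b) = R i * (fv s (\<lambda>e\<in>incident E ends s. if e \<in> D then a e else local_index (E - D) ends' i w e)
        * fv w (\<lambda>e\<in>incident E ends w. if e \<in> D then b e else local_index (E - D) ends' i w e)
        * (\<Prod>e\<in>D. fe e (a e) (b e)))" for i a b
  proof -
    have "\<forall>e\<in>E - D. glue i a b e = i e"
      unfolding glue_def by simp
    note vertices = prod_local_index_merge_ends[OF mg \<open>s \<in> V\<close> \<open>w \<in> V\<close> \<open>s \<noteq> w\<close> no_in this[unfolded D_def],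
      folded D_def ends'_def]
    have "(\<Prod>e\<in>E. fe e (fst (glue i a b e)) (snd (glue i a b e)))
      = (\<Prod>e\<in>E - D. fe e (fst (i e)) (snd (i e))) * (\<Prod>e\<in>D. fe e (a e) (b e))"
      unfolding prod.subset_diff[OF DE fin(2)] glue_def by (auto intro!: arg_cong2[where f="(*)"] prod.cong)
    moreover have "glue i a b e = (a e, b e)" if "e \<in> D" for e
      using that unfolding glue_def by simp
    ultimately show ?thesis
      unfolding F_def R_def vertices by (simp add: mult_ac cong: if_cong)
  qed
  have "tn_val n V E ends fv fe = sum F (?Y ((E - D) \<union> D))"
    unfolding tn_val_local_index F_def using DE by (simp add: Un_absorb2)
  also have "\<dots> = (\<Sum>i\<in>?Y (E - D). \<Sum>c\<in>?Y D. F (\<lambda>e. if e \<in> E - D then i e else c e))"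
    by (rule sum_PiE_Un) blast
  also have "\<dots> = (\<Sum>i\<in>?Y (E - D). \<Sum>a\<in>?X. \<Sum>b\<in>?X. F (glue i a b))"
    unfolding glue_def by (simp only: sum_PiE_Times)
  also have "\<dots> = (\<Sum>i\<in>?Y (E - D). R i * ?contract (local_index (E - D) ends' i w))"
    unfolding factor contract_tensor_def by (simp add: sum_distrib_left mult.assoc)
  also have "\<dots> = tn_val n (V - {s}) (E - D) ends' (fv(w := ?contract)) fe"
    using fin \<open>w \<in> V\<close> \<open>s \<noteq> w\<close> by (simp add: tn_val_fun_upd R_def mult_ac)
  finally show ?thesis
    unfolding D_def ends'_def ..
qed

definition out_in_norm :: "nat \<Rightarrow> 'e set \<Rightarrow> ('e \<Rightarrow> 'v \<times> 'v) \<Rightarrow> 'v \<Rightarrow> (('e \<Rightarrow> nat) \<Rightarrow> real) \<Rightarrow> real" where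
  "out_in_norm n E ends v T = matricization_norm n {e\<in>E. fst (ends e) = v} {e\<in>E. snd (ends e) = v} T"

lemma out_in_norm_nonneg: "0 \<le> out_in_norm n E ends v T"
  unfolding out_in_norm_def by (rule matricization_norm_nonneg)

lemma out_in_norm_merge_ends_other:
  assumes "v \<noteq> s" "v \<noteq> w"
  shows "out_in_norm n (E - arcs E ends s w) (merge_ends s w ends) v T = out_in_norm n E ends v T"
proof -
  have "{e\<in>E - arcs E ends s w. fst (merge_ends s w ends e) = v} = {e\<in>E. fst (ends e) = v}"
    "{e\<in>E - arcs E ends s w. snd (merge_ends s w ends e) = v} = {e\<in>E. snd (ends e) = v}"
    using assms by (auto simp: merge_ends_def arcs_def prod_eq_iff)
  then show ?thesis
    unfolding out_in_norm_def by simp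
qed

lemma frob_norm_merge_ends_le:
  assumes mg: "multigraph V E ends" and "s \<noteq> w"
    and no_in: "\<forall>e\<in>E. snd (ends e) \<noteq> s" and in_w: "\<forall>e\<in>E. snd (ends e) = w \<longrightarrow> fst (ends e) = s"
  shows "frob_norm n (incident (E - arcs E ends s w) (merge_ends s w ends) w)
      (contract_tensor n (arcs E ends s w) (incident E ends s) (incident E ends w) S T fe)
    \<le> frob_norm n (incident E ends s) S * (\<Prod>e\<in>arcs E ends s w. matrix_op_norm n (fe e))
      * out_in_norm n E ends w T"
proof -
  define D where "D = arcs E ends s w"
  define P where "P = incident E ends s - D"
  define Q where "Q = incident E ends w - D"
  have "finite E" using mg unfolding multigraph_def by blast
  then have fin: "finite P" "finite Q" "finite D"
    unfolding P_def Q_def D_def incident_def arcs_def by simp_all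
  have disj: "P \<inter> Q = {}" "P \<inter> D = {}" "Q \<inter> D = {}"
    using no_in \<open>s \<noteq> w\<close> unfolding P_def Q_def D_def incident_def arcs_def by (auto simp: prod_eq_iff)
  have legs: "incident E ends s = P \<union> D" "incident E ends w = Q \<union> D"
    "incident (E - D) (merge_ends s w ends) w = P \<union> Q"
    unfolding P_def Q_def D_def incident_merge_ends_target[OF \<open>s \<noteq> w\<close>]
    by (auto simp: incident_def arcs_def)
  have "{e\<in>E. fst (ends e) = w} = Q" "{e\<in>E. snd (ends e) = w} = D"
    using \<open>s \<noteq> w\<close> in_w unfolding Q_def D_def incident_def arcs_def by (auto simp: prod_eq_iff)
  then have "out_in_norm n E ends w T = matricization_norm n Q D T"
    unfolding out_in_norm_def by simp
  then show ?thesis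
    using frob_norm_contract_tensor_le[OF fin disj] unfolding legs D_def[symmetric] by simp
qed

lemma merge_ends_ranked:
  fixes rk :: "'v \<Rightarrow> nat"
  assumes mg: "multigraph V E ends"
    and rank: "\<forall>e\<in>E. rk (fst (ends e)) < rk (snd (ends e))" and src: "\<forall>v\<in>V - {s}. rk s < rk v"
    and no_in: "\<forall>e\<in>E. snd (ends e) \<noteq> s" and in_w: "\<forall>e\<in>E. snd (ends e) = w \<longrightarrow> fst (ends e) = s"
  shows "\<forall>e\<in>E - arcs E ends s w.
      (rk(w := rk s)) (fst (merge_ends s w ends e)) < (rk(w := rk s)) (snd (merge_ends s w ends e))"
    and "\<forall>v\<in>V - {s} - {w}. (rk(w := rk s)) w < (rk(w := rk s)) v"
proof -
  show "\<forall>v\<in>V - {s} - {w}. (rk(w := rk s)) w < (rk(w := rk s)) v"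
    using src by simp
  show "\<forall>e\<in>E - arcs E ends s w.
      (rk(w := rk s)) (fst (merge_ends s w ends e)) < (rk(w := rk s)) (snd (merge_ends s w ends e))"
  proof
    fix e assume e: "e \<in> E - arcs E ends s w"
    have "snd (ends e) \<in> V"
      using mg e unfolding multigraph_def by blast
    moreover have "snd (ends e) \<noteq> w"
      using e in_w unfolding arcs_def by (auto simp: prod_eq_iff)
    moreover have "snd (ends e) \<noteq> s" "rk (fst (ends e)) < rk (snd (ends e))"
      using e no_in rank by auto
    ultimately show "(rk(w := rk s)) (fst (merge_ends s w ends e)) < (rk(w := rk s)) (snd (merge_ends s w ends e))"
      using src unfolding merge_ends_def by auto
  qed
qed

section \<open>Ranked networks\<close>

lemma tn_val_single_vertex: "tn_val n {s} {} ends fv fe = fv s (\<lambda>_. undefined)"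
  unfolding tn_val_def incident_def by (simp add: restrict_def)

lemma frob_norm_no_legs: "frob_norm n {} T = \<bar>T (\<lambda>_. undefined)\<bar>"
  unfolding frob_norm_def by simp

lemma tn_val_le_merge_ends:
  fixes n :: nat and E :: "'e set" and ends :: "'e \<Rightarrow> 'v \<times> 'v" and s w :: 'v
    and fv :: "'v \<Rightarrow> ('e \<Rightarrow> nat) \<Rightarrow> real" and fe :: "'e \<Rightarrow> nat \<Rightarrow> nat \<Rightarrow> real"
  defines "fv' \<equiv> fv(w := contract_tensor n (arcs E ends s w) (incident E ends s) (incident E ends w) (fv s) (fv w) fe)"
  assumes mg: "multigraph V E ends" and "s \<in> V" "w \<in> V" "s \<noteq> w"
    and no_in: "\<forall>e\<in>E. snd (ends e) \<noteq> s" and in_w: "\<forall>e\<in>E. snd (ends e) = w \<longrightarrow> fst (ends e) = s"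
    and merged: "\<bar>tn_val n (V - {s}) (E - arcs E ends s w) (merge_ends s w ends) fv' fe\<bar>
      \<le> frob_norm n (incident (E - arcs E ends s w) (merge_ends s w ends) w) (fv' w)
        * (\<Prod>v\<in>V - {s} - {w}. out_in_norm n (E - arcs E ends s w) (merge_ends s w ends) v (fv' v))
        * (\<Prod>e\<in>E - arcs E ends s w. matrix_op_norm n (fe e))"
  shows "\<bar>tn_val n V E ends fv fe\<bar> \<le> frob_norm n (incident E ends s) (fv s)
    * (\<Prod>v\<in>V - {s}. out_in_norm n E ends v (fv v)) * (\<Prod>e\<in>E. matrix_op_norm n (fe e))"
proof -
  define D where "D = arcs E ends s w"
  have fin: "finite V" "finite E" and "D \<subseteq> E"
    using mg unfolding multigraph_def D_def arcs_def by auto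
  have "(\<Prod>v\<in>V - {s} - {w}. out_in_norm n (E - D) (merge_ends s w ends) v (fv' v))
    = (\<Prod>v\<in>V - {s} - {w}. out_in_norm n E ends v (fv v))"
    unfolding D_def fv'_def by (intro prod.cong refl) (simp add: out_in_norm_merge_ends_other)
  moreover have "tn_val n (V - {s}) (E - D) (merge_ends s w ends) fv' fe = tn_val n V E ends fv fe"
    unfolding D_def fv'_def by (rule tn_val_merge_ends[OF mg \<open>s \<in> V\<close> \<open>w \<in> V\<close> \<open>s \<noteq> w\<close> no_in])
  ultimately have "\<bar>tn_val n V E ends fv fe\<bar> \<le> frob_norm n (incident (E - D) (merge_ends s w ends) w) (fv' w)
      * (\<Prod>v\<in>V - {s} - {w}. out_in_norm n E ends v (fv v)) * (\<Prod>e\<in>E - D. matrix_op_norm n (fe e))"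
    using merged unfolding D_def[symmetric] by simp
  also have "\<dots> \<le> (frob_norm n (incident E ends s) (fv s) * (\<Prod>e\<in>D. matrix_op_norm n (fe e))
        * out_in_norm n E ends w (fv w))
      * (\<Prod>v\<in>V - {s} - {w}. out_in_norm n E ends v (fv v)) * (\<Prod>e\<in>E - D. matrix_op_norm n (fe e))"
  proof -
    have "frob_norm n (incident (E - D) (merge_ends s w ends) w) (fv' w) \<le> frob_norm n (incident E ends s) (fv s)
        * (\<Prod>e\<in>D. matrix_op_norm n (fe e)) * out_in_norm n E ends w (fv w)"
      unfolding fv'_def D_def using frob_norm_merge_ends_le[OF mg \<open>s \<noteq> w\<close> no_in in_w] by simp
    then show ?thesis
      by (intro mult_right_mono prod_nonneg) (simp_all add: out_in_norm_nonneg matrix_op_norm_nonneg)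
  qed
  also have "\<dots> = frob_norm n (incident E ends s) (fv s)
      * (\<Prod>v\<in>V - {s}. out_in_norm n E ends v (fv v)) * (\<Prod>e\<in>E. matrix_op_norm n (fe e))"
    using fin \<open>D \<subseteq> E\<close> \<open>w \<in> V\<close> \<open>s \<noteq> w\<close>
    by (simp add: prod.remove[of "V - {s}" w] prod.subset_diff[of D E] mult_ac)
  finally show ?thesis .
qed

lemma tn_val_le_ranked:
  fixes rk :: "'v \<Rightarrow> nat" and ends :: "'e \<Rightarrow> 'v \<times> 'v"
  assumes "multigraph V E ends" "s \<in> V"
    and "\<forall>e\<in>E. rk (fst (ends e)) < rk (snd (ends e))" "\<forall>v\<in>V - {s}. rk s < rk v"
  shows "\<bar>tn_val n V E ends fv fe\<bar> \<le> frob_norm n (incident E ends s) (fv s)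
    * (\<Prod>v\<in>V - {s}. out_in_norm n E ends v (fv v)) * (\<Prod>e\<in>E. matrix_op_norm n (fe e))"
  using assms
proof (induction "card V" arbitrary: V E ends fv rk s rule: less_induct)
  case less
  note mg = less.prems(1) and sV = less.prems(2) and rank = less.prems(3) and src = less.prems(4)
  have "finite V" and arc_ends: "\<And>e. e \<in> E \<Longrightarrow> fst (ends e) \<in> V \<and> snd (ends e) \<in> V \<and> fst (ends e) \<noteq> snd (ends e)"
    using mg unfolding multigraph_def by auto
  have no_in: "\<forall>e\<in>E. snd (ends e) \<noteq> s"
    using arc_ends rank src by (metis Diff_iff less_asym singletonD)
  show ?case
  proof (cases "V = {s}")
    case True
    then have "E = {}"
      using arc_ends by fastforce
    with True show ?thesis
      by (simp add: tn_val_single_vertex frob_norm_no_legs incident_def)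
  next
    case False
    then obtain w where w: "w \<in> V - {s}" and w_min: "\<forall>v\<in>V - {s}. rk w \<le> rk v"
      using sV ex_has_least_nat[of "\<lambda>v. v \<in> V - {s}" _ rk] by blast
    then have "s \<noteq> w" "w \<in> V" by auto
    have in_w: "\<forall>e\<in>E. snd (ends e) = w \<longrightarrow> fst (ends e) = s"
      using arc_ends rank w_min by (metis Diff_iff leD singletonD)
    have "card (V - {s}) < card V"
      using \<open>finite V\<close> sV by (rule card_Diff1_less)
    from less.hyps[OF this multigraph_merge_ends[OF mg \<open>w \<in> V\<close> \<open>s \<noteq> w\<close> no_in] w
        merge_ends_ranked[OF mg rank src no_in in_w]]
    show ?thesis
      by (rule tn_val_le_merge_ends[OF mg sV \<open>w \<in> V\<close> \<open>s \<noteq> w\<close> no_in in_w])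
  qed
qed

section \<open>Bipolar orientations\<close>

lemma incident_oriented_arc: "incident E (oriented_arc ends d) v = incident E ends v"
  unfolding incident_def oriented_arc_def by auto

lemma multigraph_oriented_arc: "multigraph V E ends \<Longrightarrow> multigraph V E (oriented_arc ends d)"
  unfolding multigraph_def oriented_arc_def by auto

lemma tn_val_oriented_arc:
  assumes "multigraph V E ends"
  shows "tn_val n V E (oriented_arc ends d) fv (\<lambda>e i j. if d e then fe e i j else fe e j i)
    = tn_val n V E ends fv fe"
proof -
  let ?Y = "PiE E (\<lambda>_. {..<n} \<times> {..<n})"
  define flip where "flip = (\<lambda>c. \<lambda>e\<in>E. if d e then c e else prod.swap (c e :: nat \<times> nat))"
  define F where "F = (\<lambda>ends' fe' c. (\<Prod>v\<in>V. fv v (local_index E ends' c v))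
    * (\<Prod>e\<in>E. fe' e (fst (c e)) (snd (c e))))"
  have loop: "fst (ends e) \<noteq> snd (ends e)" if "e \<in> E" for e
    using assms that unfolding multigraph_def by blast
  have "local_index E (oriented_arc ends d) c v = local_index E ends (flip c) v" for c v
    unfolding local_index_def incident_oriented_arc
    by (intro restrict_ext) (auto simp: flip_def oriented_arc_def incident_def dest: loop)
  then have "F (oriented_arc ends d) (\<lambda>e i j. if d e then fe e i j else fe e j i) c = F ends fe (flip c)" for c
    unfolding F_def flip_def by (auto intro!: arg_cong2[where f="(*)"] prod.cong)
  then have "tn_val n V E (oriented_arc ends d) fv (\<lambda>e i j. if d e then fe e i j else fe e j i)
      = (\<Sum>c\<in>?Y. F ends fe (flip c))"
    unfolding tn_val_local_index F_def by simp
  also have "\<dots> = (\<Sum>c\<in>?Y. F ends fe c)"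
    by (rule sum.reindex_bij_witness[of _ flip flip]) (auto simp: flip_def PiE_def extensional_def Pi_def mem_Times_iff)
  finally show ?thesis
    unfolding tn_val_local_index F_def .
qed

lemma bipolar_orientationD:
  assumes "bipolar_orientation V E ends d s t"
  shows "s \<in> V" "t \<in> V" "s \<noteq> t" "acyclic (oriented_arc ends d ` E)"
    and "\<And>e. e \<in> E \<Longrightarrow> snd (oriented_arc ends d e) \<noteq> s"
    and "\<And>v. v \<in> V \<Longrightarrow> v \<noteq> s \<Longrightarrow> \<exists>e\<in>E. snd (oriented_arc ends d e) = v"
    and "\<And>e. e \<in> E \<Longrightarrow> fst (oriented_arc ends d e) \<noteq> t"
    and "\<And>v. v \<in> V \<Longrightarrow> v \<noteq> t \<Longrightarrow> \<exists>e\<in>E. fst (oriented_arc ends d e) = v"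
  using assms unfolding bipolar_orientation_def by blast+

lemma finite_ancestors: "finite R \<Longrightarrow> finite {x. (x, v) \<in> R\<^sup>+}"
  by (rule finite_subset[of _ "fst ` R\<^sup>+"]) force+

lemma card_ancestors_less:
  assumes "finite R" "acyclic R" "(u, v) \<in> R"
  shows "card {x. (x, u) \<in> R\<^sup>+} < card {x. (x, v) \<in> R\<^sup>+}"
proof (rule psubset_card_mono[OF finite_ancestors[OF assms(1)]])
  have "u \<notin> {x. (x, u) \<in> R\<^sup>+}"
    using assms(2) unfolding acyclic_def by blast
  then show "{x. (x, u) \<in> R\<^sup>+} \<subset> {x. (x, v) \<in> R\<^sup>+}"
    using assms(3) by (blast intro: trancl_into_trancl)
qed

lemma bipolar_orientation_ranked:
  assumes mg: "multigraph V E ends" and bp: "bipolar_orientation V E ends d s t"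
  obtains rk :: "'v \<Rightarrow> nat"
  where "\<forall>e\<in>E. rk (fst (oriented_arc ends d e)) < rk (snd (oriented_arc ends d e))"
    and "\<forall>v\<in>V - {s}. rk s < rk v"
proof
  define R where "R = oriented_arc ends d ` E"
  define rk where "rk = (\<lambda>v. card {u. (u, v) \<in> R\<^sup>+})"
  have arc: "(fst (oriented_arc ends d e), snd (oriented_arc ends d e)) \<in> R" if "e \<in> E" for e
    using that unfolding R_def by simp
  have "finite R"
    using mg unfolding R_def multigraph_def by blast
  have "acyclic R"
    using bipolar_orientationD(4)[OF bp] unfolding R_def .
  show "\<forall>e\<in>E. rk (fst (oriented_arc ends d e)) < rk (snd (oriented_arc ends d e))"
    unfolding rk_def using card_ancestors_less[OF \<open>finite R\<close> \<open>acyclic R\<close> arc] by blast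
  have "(u, s) \<notin> R\<^sup>+" for u
  proof
    assume "(u, s) \<in> R\<^sup>+"
    then obtain x where "(x, s) \<in> R"
      by (auto elim: tranclE)
    then obtain e where "e \<in> E" "snd (oriented_arc ends d e) = s"
      unfolding R_def by (metis image_iff snd_conv)
    with bipolar_orientationD(5)[OF bp] show False
      by blast
  qed
  then have "rk s = 0"
    unfolding rk_def by simp
  moreover have "rk v \<noteq> 0" if v: "v \<in> V - {s}" for v
  proof -
    obtain e where "e \<in> E" "snd (oriented_arc ends d e) = v"
      using bipolar_orientationD(6)[OF bp] v by blast
    then have "fst (oriented_arc ends d e) \<in> {u. (u, v) \<in> R\<^sup>+}"
      using arc by blast
    then show ?thesis
      unfolding rk_def using finite_ancestors[OF \<open>finite R\<close>] by (auto simp: card_eq_0_iff)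
  qed
  ultimately show "\<forall>v\<in>V - {s}. rk s < rk v"
    by auto
qed

lemma prod_out_in_norm_le_bipolar:
  assumes mg: "multigraph V E ends" and bp: "bipolar_orientation V E ends d s t"
  shows "(\<Prod>v\<in>V - {s}. out_in_norm n E (oriented_arc ends d) v (fv v))
    \<le> frob_norm n (incident E ends t) (fv t) * (\<Prod>v\<in>V - {s, t}. mat_op_norm n (incident E ends v) (fv v))"
proof -
  let ?out = "\<lambda>v. {e\<in>E. fst (oriented_arc ends d e) = v}"
  let ?in = "\<lambda>v. {e\<in>E. snd (oriented_arc ends d e) = v}"
  note bpD = bipolar_orientationD[OF bp]
  have fin: "finite V" "finite E" and loop: "\<And>e. e \<in> E \<Longrightarrow> fst (oriented_arc ends d e) \<noteq> snd (oriented_arc ends d e)"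
    using multigraph_oriented_arc[OF mg] unfolding multigraph_def by auto
  have inc: "incident E ends v = ?out v \<union> ?in v" for v
    unfolding incident_def oriented_arc_def by auto
  have split: "incident E ends v - ?out v = ?in v" for v
    unfolding inc using loop by auto
  have out_t: "?out t = {}"
    using bpD(7) by blast
  have in_t: "?in t = incident E ends t"
    using split[of t] unfolding out_t by simp
  have sink: "out_in_norm n E (oriented_arc ends d) t (fv t) \<le> frob_norm n (incident E ends t) (fv t)"
    unfolding out_in_norm_def out_t in_t by (rule matricization_norm_empty_le_frob_norm)
  have inner: "out_in_norm n E (oriented_arc ends d) v (fv v) \<le> mat_op_norm n (incident E ends v) (fv v)"
    if "v \<in> V - {s, t}" for v
  proof -
    have "?out v \<subseteq> incident E ends v" "?out v \<noteq> {}" "incident E ends v - ?out v \<noteq> {}"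
      using that bpD(6,8) unfolding split by (auto simp: inc)
    then show ?thesis
      unfolding out_in_norm_def split[symmetric] using fin(2)
      by (intro matricization_norm_le_mat_op_norm) (simp_all add: incident_def)
  qed
  have "V - {s} = insert t (V - {s, t})"
    using bpD(2,3) by auto
  then have "(\<Prod>v\<in>V - {s}. out_in_norm n E (oriented_arc ends d) v (fv v))
    = out_in_norm n E (oriented_arc ends d) t (fv t) * (\<Prod>v\<in>V - {s, t}. out_in_norm n E (oriented_arc ends d) v (fv v))"
    using fin(1) by simp
  also have "\<dots> \<le> frob_norm n (incident E ends t) (fv t) * (\<Prod>v\<in>V - {s, t}. mat_op_norm n (incident E ends v) (fv v))"
    by (intro mult_mono sink prod_mono conjI inner out_in_norm_nonneg prod_nonneg frob_norm_nonneg) auto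
  finally show ?thesis .
qed

lemma prod_matrix_op_norm_oriented_le:
  "(\<Prod>e\<in>E. matrix_op_norm n (\<lambda>i j. if d e then fe e i j else fe e j i)) \<le> (\<Prod>e\<in>E. matrix_op_norm n (fe e))"
proof (intro prod_mono conjI matrix_op_norm_nonneg)
  show "matrix_op_norm n (\<lambda>i j. if d e then fe e i j else fe e j i) \<le> matrix_op_norm n (fe e)" for e
    by (cases "d e") (simp_all add: matrix_op_norm_transpose_le)
qed

theorem lemma5p4:
  fixes n :: nat and V :: "'v set" and E :: "'e set" and ends :: "'e \<Rightarrow> 'v \<times> 'v"
    and fv :: "'v \<Rightarrow> ('e \<Rightarrow> nat) \<Rightarrow> real" and fe :: "'e \<Rightarrow> nat \<Rightarrow> nat \<Rightarrow> real"
    and s t :: 'v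
  assumes "multigraph V E ends"
    and "has_bipolar_orientation V E ends s t"
  shows "\<bar>tn_val n V E ends fv fe\<bar> \<le>
    frob_norm n (incident E ends s) (fv s) * frob_norm n (incident E ends t) (fv t)
    * (\<Prod>v\<in>V - {s, t}. mat_op_norm n (incident E ends v) (fv v))
    * (\<Prod>e\<in>E. matrix_op_norm n (fe e))"
proof -
  obtain d where bp: "bipolar_orientation V E ends d s t"
    using assms(2) unfolding has_bipolar_orientation_def by blast
  obtain rk :: "'v \<Rightarrow> nat"
    where "\<forall>e\<in>E. rk (fst (oriented_arc ends d e)) < rk (snd (oriented_arc ends d e))" "\<forall>v\<in>V - {s}. rk s < rk v"
    using bipolar_orientation_ranked[OF assms(1) bp] by blast
  note ranked = tn_val_le_ranked[OF multigraph_oriented_arc[OF assms(1)] bipolar_orientationD(1)[OF bp] this]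
  define fe' where "fe' = (\<lambda>e i j. if d e then fe e i j else fe e j i)"
  have "\<bar>tn_val n V E ends fv fe\<bar> = \<bar>tn_val n V E (oriented_arc ends d) fv fe'\<bar>"
    unfolding fe'_def tn_val_oriented_arc[OF assms(1)] ..
  also have "\<dots> \<le> frob_norm n (incident E ends s) (fv s)
      * (\<Prod>v\<in>V - {s}. out_in_norm n E (oriented_arc ends d) v (fv v)) * (\<Prod>e\<in>E. matrix_op_norm n (fe' e))"
    using ranked unfolding incident_oriented_arc .
  also have "\<dots> \<le> frob_norm n (incident E ends s) (fv s)
      * (\<Prod>v\<in>V - {s}. out_in_norm n E (oriented_arc ends d) v (fv v)) * (\<Prod>e\<in>E. matrix_op_norm n (fe e))"
    unfolding fe'_def
    by (intro mult_left_mono prod_matrix_op_norm_oriented_le mult_nonneg_nonneg prod_nonneg frob_norm_nonneg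
        out_in_norm_nonneg)
  also have "\<dots> \<le> frob_norm n (incident E ends s) (fv s) * (frob_norm n (incident E ends t) (fv t)
      * (\<Prod>v\<in>V - {s, t}. mat_op_norm n (incident E ends v) (fv v))) * (\<Prod>e\<in>E. matrix_op_norm n (fe e))"
    by (intro mult_right_mono mult_left_mono prod_out_in_norm_le_bipolar[OF assms(1) bp] prod_nonneg
        frob_norm_nonneg matrix_op_norm_nonneg)
  finally show ?thesis
    by (simp add: mult_ac)
qed

end
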